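(* Let $X=\{x_0,\ldots,x_m\}$, $X'=\{x'_0,\ldots,x'_q\}$, $c\in\mathbb{R}^q\langle\langle X\rangle\rangle$ and $d\in\mathbb{R}^m\langle\langle X'\rangle\rangle$ purely improper. Consider the closed-loop system in which the Chen-Fliess series $F_c$ is in multiplicative output feedback with $F_d$: $y=F_c[u]$, $u=v\cdot F_d[y]$ (componentwise product), with external input $v$. Then the closed-loop system is (formally) a Chen-Fliess series $y=F_e[v]$ whose generating series is the multiplicative dynamic feedback product $e=c\,\check{@}\,d:=c\,\tilde\circ\,\delta_{(d^{\sqcup\!\sqcup-1}\circ c)^{\circ-1}}$.
   Context: For $c\in\mathbb{R}^\ell\langle\langle X\rangle\rangle$, the Chen-Fliess series is $F_c[u](t)=\sum_{\eta\in X^\ast}(c,\eta)E_\eta[u](t,t_0)$ with $E_\emptyset=1$, $E_{x_i\bar\eta}[u](t,t_0)=\int_{t_0}^tu_i(\tau)E_{\bar\eta}[u](\tau,t_0)d\tau$, $u_0=1$ (understood formally, without convergence assumptions). Series notation: coefficients in $\mathbb{R}^\ell$, componentwise products, purely improper means every component has nonzero constant term. Shuffle product $\sqcup\!\sqcup$: bilinear, $(x_i\eta)\sqcup\!\sqcup(x_j\xi)=x_i(\eta\sqcup\!\sqcup x_j\xi)+x_j(x_i\eta\sqcup\!\sqcup\xi)$, $\eta\sqcup\!\sqcup\emptyset=\emptyset\sqcup\!\sqcup\eta=\eta$; $d^{\sqcup\!\sqcup-1}$ is the componentwise shuffle inverse. Composition product: for $c\in\mathbb{R}^k\langle\langle X'\rangle\rangle$,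 $X'=\{x'_0,\ldots,x'_\ell\}$, $e\in\mathbb{R}^\ell\langle\langle X\rangle\rangle$, $c\circ e=\sum_{\eta\in X'^\ast}(c,\eta)\psi_e(\eta)(\mathbf 1)$ with $\mathbf 1=1\emptyset$, $\psi_e(x'_i)(w)=x_0(e_i\sqcup\!\sqcup w)$, $e_0:=\mathbf 1$, $\psi_e$ multiplicative (concatenation to composition); $F_{c\circ e}=F_c\circ F_e$. Multiplicative mixed composition: $c\,\tilde\circ\,\delta_g=\sum_{\eta}(c,\eta)\bar\phi_g(\eta)(\mathbf 1)$ with $\bar\phi_g(x_0)(w)=x_0w$, $\bar\phi_g(x_i)(w)=x_i(g_i\sqcup\!\sqcup w)$ ($i\ge1$), multiplicative; $F_{c\,\tilde\circ\,\delta_g}[v]=F_c[v\cdot F_g[v]]$. For purely improper $g\in\mathbb{R}^m\langle\langle X\rangle\rangle$, $g^{\circ-1}$ is the unique $h\in\mathbb{R}^m\langle\langle X\rangle\rangle$ with $h=g^{\sqcup\!\sqcup-1}\,\tilde\circ\,\delta_h$. *)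

theory Defs
  imports "HOL-Computational_Algebra.Formal_Power_Series"
begin

text \<open>Words over an alphabet X = {x_0,...,x_n} are lists of letter indices (nat list).
A scalar formal series is a map from words to real coefficients; an R^l-valued series
is a map from a component index to a scalar series, components indexed 1..l.\<close>

type_synonym ser = "nat list \<Rightarrow> real"
type_synonym vser = "nat \<Rightarrow> ser"

definition series_on :: "nat \<Rightarrow> nat \<Rightarrow> vser \<Rightarrow> bool" where
  "series_on n l c \<longleftrightarrow> (\<forall>i w. c i w \<noteq> 0 \<longrightarrow> i \<in> {1..l} \<and> set w \<subseteq> {0..n})"

definition purely_improper :: "nat \<Rightarrow> vser \<Rightarrow> bool" where
  "purely_improper l c \<longleftrightarrow> (\<forall>i\<in>{1..l}. c i [] \<noteq> 0)"

definition one_ser :: ser where "one_ser w = (if w = [] then 1 else 0)"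

definition word_ser :: "nat list \<Rightarrow> ser" where "word_ser u w = (if w = u then 1 else 0)"

definition prefix_ser :: "nat \<Rightarrow> ser \<Rightarrow> ser" where
  "prefix_ser a s w = (case w of [] \<Rightarrow> 0 | b # w' \<Rightarrow> (if b = a then s w' else 0))"

fun sh_word :: "nat list \<Rightarrow> nat list \<Rightarrow> ser" where
  "sh_word [] v = word_ser v"
| "sh_word (a # u) [] = word_ser (a # u)"
| "sh_word (a # u) (b # v) =
     (\<lambda>w. prefix_ser a (sh_word u (b # v)) w + prefix_ser b (sh_word (a # u) v) w)"

text \<open>bilinear extension to series (locally finite: only words u,v with
|u|+|v|=|w| and letters in w can contribute to the coefficient of w)\<close>
definition shuffle :: "ser \<Rightarrow> ser \<Rightarrow> ser" where
  "shuffle s t w = (\<Sum>(u,v)\<in>{(u,v). length u + length v = length w \<and> set u \<subseteq> set w \<and> set v \<subseteq> set w}.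
                      s u * t v * sh_word u v w)"

definition shuffle_inv :: "ser \<Rightarrow> ser" where
  "shuffle_inv s = (THE t. shuffle s t = one_ser)"

text \<open>psi_e(eta)(1) for the composition product; e_0 := 1\<close>
fun psi :: "vser \<Rightarrow> nat list \<Rightarrow> ser \<Rightarrow> ser" where
  "psi e [] s = s"
| "psi e (i # eta) s = prefix_ser 0 (shuffle (if i = 0 then one_ser else e i) (psi e eta s))"

text \<open>composition product c o e, c over the alphabet {x'_0..x'_l}\<close>
definition comp_ser :: "nat \<Rightarrow> ser \<Rightarrow> vser \<Rightarrow> ser" where
  "comp_ser l c e w = (\<Sum>eta\<in>{eta. length eta \<le> length w \<and> set eta \<subseteq> {0..l}}.
                          c eta * psi e eta one_ser w)"

text \<open>phi-bar_g(eta)(1) for the multiplicative mixed composition\<close>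
fun phibar :: "vser \<Rightarrow> nat list \<Rightarrow> ser \<Rightarrow> ser" where
  "phibar g [] s = s"
| "phibar g (i # eta) s =
     (if i = 0 then prefix_ser 0 (phibar g eta s) else prefix_ser i (shuffle (g i) (phibar g eta s)))"

definition mixed_comp :: "ser \<Rightarrow> vser \<Rightarrow> ser" where
  "mixed_comp c g w = (\<Sum>eta\<in>{eta. length eta \<le> length w \<and> set eta \<subseteq> set w}.
                          c eta * phibar g eta one_ser w)"

text \<open>composition inverse of a purely improper g in R^m<<X>>, X = {x_0..x_m}:
the unique h in R^m<<X>> with h = g^{sh-1} mixed-composed with delta_h\<close>
definition comp_inv :: "nat \<Rightarrow> vser \<Rightarrow> vser" where
  "comp_inv m g = (THE h. series_on m m h \<and> (\<forall>i\<in>{1..m}. h i = mixed_comp (shuffle_inv (g i)) h))"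

definition fb_product :: "nat \<Rightarrow> nat \<Rightarrow> vser \<Rightarrow> vser \<Rightarrow> vser" where
  "fb_product m q c d =
     (let g = (\<lambda>j. if j \<in> {1..m} then comp_ser q (shuffle_inv (d j)) c else (\<lambda>_. 0));
          h = comp_inv m g
      in (\<lambda>i. mixed_comp (c i) h))"

text \<open>Formal Chen-Fliess series: time functions are formal power series in (t - t0),
inputs u_1,u_2,... are real fps, u_0 = 1, iterated integrals from t0.\<close>
fun iter_int :: "(nat \<Rightarrow> real fps) \<Rightarrow> nat list \<Rightarrow> real fps" where
  "iter_int u [] = 1"
| "iter_int u (i # eta) = fps_integral0 ((if i = 0 then 1 else u i) * iter_int u eta)"

text \<open>F_c[u] for a scalar series c over {x_0..x_n}; the coefficient of t^k only involves
words of length \<le> k, so the sum is formally well defined.\<close>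
definition CF :: "nat \<Rightarrow> ser \<Rightarrow> (nat \<Rightarrow> real fps) \<Rightarrow> real fps" where
  "CF n c u = Abs_fps (\<lambda>k. \<Sum>eta\<in>{eta. length eta \<le> k \<and> set eta \<subseteq> {0..n}}.
                              c eta * fps_nth (iter_int u eta) k)"

end

theory Submission
  imports Defs
begin

(* Write g_j = d_j^{sh-1} o c, h = g^{o-1}, u = v * F_h[v] and y = F_c[u] = F_e[v]. Chen-Fliess
   maps turn shuffles into products, composition products into compositions and the mixed
   composition c ~o delta_g into F_c[v * F_g[v]]. Since h = g^{sh-1} ~o delta_h, this gives
   F_h[v] = 1 / F_g[u] = 1 / F_{d^{sh-1}}[y] = F_d[y], so y solves the closed loop. The closed loop
   has no other solution, because the k-th coefficient of F_c[u] depends only on the coefficients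
   of u below k. The shuffle and composition inverses exist (and live on the right alphabet)
   because their defining equations fix the coefficient of a word in terms of shorter words. *)

unbundle fps_syntax

section \<open>Formal power series\<close>

(* Integration by parts; it is the recursion defining sh_word. *)
lemma fps_integral0_mult_fps_integral0:
  fixes f g :: "'a::field_char_0 fps"
  shows "fps_integral0 f * fps_integral0 g = fps_integral0 (f * fps_integral0 g + fps_integral0 f * g)"
proof -
  have "fps_deriv (fps_integral0 f * fps_integral0 g)
      = fps_deriv (fps_integral0 (f * fps_integral0 g + fps_integral0 f * g))"
    by (simp add: fps_deriv_fps_integral fps_deriv_mult)
  then show ?thesis unfolding fps_deriv_eq_iff by simp
qed

lemma fps_mult_nth_cong:
  assumes "\<And>j. j \<le> n \<Longrightarrow> f $ j = f' $ j" and "\<And>j. j \<le> n \<Longrightarrow> g $ j = g' $ j"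
  shows "(f * g) $ n = (f' * g') $ n"
  unfolding fps_mult_nth using assms by (intro sum.cong) auto

section \<open>Coefficients of Chen-Fliess series\<close>

definition words_le :: "nat \<Rightarrow> nat \<Rightarrow> nat list set" where
  "words_le N k = {w. length w \<le> k \<and> set w \<subseteq> {0..N}}"

lemma finite_words_le [simp]: "finite (words_le N k)"
  using finite_lists_length_le[of "{0..N}" k] by (simp add: words_le_def conj_commute)

definition letter_input :: "(nat \<Rightarrow> real fps) \<Rightarrow> nat \<Rightarrow> real fps" where
  "letter_input u i = (if i = 0 then 1 else u i)"

lemma iter_int_Cons_letter: "iter_int u (i # w) = fps_integral0 (letter_input u i * iter_int u w)"
  by (simp add: letter_input_def)

lemma iter_int_nth_below_length: "k < length w \<Longrightarrow> iter_int u w $ k = 0"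
proof (induction w arbitrary: k)
  case (Cons i w)
  then show ?case
    by (cases k) (auto simp del: iter_int.simps simp: iter_int_Cons_letter fps_mult_nth intro!: sum.neutral)
qed simp

lemma CF_nth: "k \<le> K \<Longrightarrow> CF N c u $ k = (\<Sum>w\<in>words_le N K. c w * iter_int u w $ k)"
proof -
  assume "k \<le> K"
  then have "words_le N k \<subseteq> words_le N K" by (auto simp: words_le_def)
  moreover have "c w * iter_int u w $ k = 0" if "w \<in> words_le N K - words_le N k" for w
    using that iter_int_nth_below_length[of k w u] by (auto simp: words_le_def)
  ultimately show ?thesis
    unfolding CF_def fps_nth_Abs_fps words_le_def[symmetric] by (intro sum.mono_neutral_left) auto
qed

lemma CF_nth_0: "CF N c u $ 0 = c []"
proof -
  have "words_le N 0 = {[]}" by (auto simp: words_le_def)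
  then show ?thesis by (simp add: CF_nth[of 0 0])
qed

lemma CF_nth_linear_combination:
  assumes "finite E" and "\<And>w. w \<in> words_le N k \<Longrightarrow> s w = (\<Sum>e\<in>E. a e * t e w)"
  shows "CF N s u $ k = (\<Sum>e\<in>E. a e * CF N (t e) u $ k)"
proof -
  have "CF N s u $ k = (\<Sum>w\<in>words_le N k. (\<Sum>e\<in>E. a e * t e w) * iter_int u w $ k)"
    by (simp add: CF_nth[of k k] assms(2))
  also have "\<dots> = (\<Sum>e\<in>E. a e * (\<Sum>w\<in>words_le N k. t e w * iter_int u w $ k))"
    by (simp add: sum_distrib_left sum_distrib_right mult.assoc sum.swap[of _ E])
  finally show ?thesis by (simp add: CF_nth[of k k])
qed

lemma CF_add: "CF N (\<lambda>w. s w + t w) u = CF N s u + CF N t u"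
  by (rule fps_ext) (simp add: CF_def sum.distrib distrib_right)

lemma CF_word_ser: "set v \<subseteq> {0..N} \<Longrightarrow> CF N (word_ser v) u = iter_int u v"
proof (rule fps_ext)
  fix k assume v: "set v \<subseteq> {0..N}"
  have "CF N (word_ser v) u $ k = (\<Sum>w\<in>words_le N (max k (length v)). if w = v then iter_int u v $ k else 0)"
    unfolding CF_nth[of k "max k (length v)", OF max.cobounded1] by (rule sum.cong) (auto simp: word_ser_def)
  also have "\<dots> = iter_int u v $ k"
    using v by (simp add: sum.delta[OF finite_words_le]) (simp add: words_le_def)
  finally show "CF N (word_ser v) u $ k = iter_int u v $ k" .
qed

lemma CF_one_ser [simp]: "CF N one_ser u = 1"
proof -
  have "one_ser = word_ser []" by (auto simp: one_ser_def word_ser_def)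
  then show ?thesis using CF_word_ser[of "[]" N u] by simp
qed

lemma CF_prefix_ser:
  assumes "i \<le> N"
  shows "CF N (prefix_ser i s) u = fps_integral0 (letter_input u i * CF N s u)"
proof (rule fps_ext)
  fix k
  show "CF N (prefix_ser i s) u $ k = fps_integral0 (letter_input u i * CF N s u) $ k"
  proof (cases k)
    case 0
    then show ?thesis by (simp add: CF_nth_0 prefix_ser_def)
  next
    case (Suc k')
    have prefix: "prefix_ser i s w = (\<Sum>v\<in>words_le N k'. s v * word_ser (i # v) w)"
      if "w \<in> words_le N k" for w
    proof (cases w)
      case (Cons b v)
      with that Suc have "v \<in> words_le N k'" by (simp add: words_le_def)
      with Cons show ?thesis
        by (simp add: prefix_ser_def word_ser_def if_distrib sum.delta'[OF finite_words_le] cong: if_cong)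
    qed (simp add: prefix_ser_def word_ser_def)
    have "CF N (prefix_ser i s) u $ k = (\<Sum>v\<in>words_le N k'. s v * CF N (word_ser (i # v)) u $ k)"
      by (rule CF_nth_linear_combination[OF finite_words_le prefix])
    also have "\<dots> = (\<Sum>v\<in>words_le N k'. s v * iter_int u (i # v) $ k)"
      using assms by (intro sum.cong refl) (simp del: iter_int.simps add: CF_word_ser words_le_def)
    also have "\<dots> = inverse (of_nat k) *
        (\<Sum>v\<in>words_le N k'. s v * (\<Sum>j=0..k'. iter_int u v $ j * letter_input u i $ (k' - j)))"
      using Suc by (simp del: iter_int.simps add: iter_int_Cons_letter fps_mult_nth sum_distrib_left
          mult.commute[of "letter_input u i"] mult_ac)
    also have "\<dots> = inverse (of_nat k) * (\<Sum>j=0..k'. CF N s u $ j * letter_input u i $ (k' - j))"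
      by (simp add: CF_nth[of _ k'] sum_distrib_left sum_distrib_right sum.swap[of _ "words_le N k'"] mult_ac)
    also have "\<dots> = fps_integral0 (letter_input u i * CF N s u) $ k"
      using Suc by (simp add: fps_mult_nth mult.commute[of "letter_input u i"])
    finally show ?thesis .
  qed
qed

section \<open>Shuffle product\<close>

lemma prefix_ser_nonzero: "prefix_ser a s w \<noteq> 0 \<Longrightarrow> \<exists>w'. w = a # w' \<and> s w' \<noteq> 0"
  by (cases w) (auto simp: prefix_ser_def split: if_splits)

definition shuffle_pairs :: "nat list \<Rightarrow> (nat list \<times> nat list) set" where
  "shuffle_pairs w = {(a, b). length a + length b = length w \<and> set a \<subseteq> set w \<and> set b \<subseteq> set w}"

lemma finite_shuffle_pairs [simp]: "finite (shuffle_pairs w)"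
proof -
  let ?L = "{a. set a \<subseteq> set w \<and> length a \<le> length w}"
  have "finite ?L" by (rule finite_lists_length_le) simp
  moreover have "shuffle_pairs w \<subseteq> ?L \<times> ?L" by (auto simp: shuffle_pairs_def)
  ultimately show ?thesis by (meson finite_SigmaI finite_subset)
qed

lemma shuffle_eq: "shuffle s t w = (\<Sum>(a, b)\<in>shuffle_pairs w. s a * t b * sh_word a b w)"
  unfolding shuffle_def shuffle_pairs_def ..

lemma sh_word_nonzero:
  "sh_word a b w \<noteq> 0 \<Longrightarrow> length w = length a + length b \<and> set w = set a \<union> set b"
proof (induction a b arbitrary: w rule: sh_word.induct)
  case (3 a u b v)
  from "3.prems" have "prefix_ser a (sh_word u (b # v)) w \<noteq> 0 \<or> prefix_ser b (sh_word (a # u) v) w \<noteq> 0"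
    by auto
  then show ?case
  proof
    assume "prefix_ser a (sh_word u (b # v)) w \<noteq> 0"
    with "3.IH"(1) show ?case by (fastforce dest: prefix_ser_nonzero)
  next
    assume "prefix_ser b (sh_word (a # u) v) w \<noteq> 0"
    with "3.IH"(2) show ?case by (fastforce dest: prefix_ser_nonzero)
  qed
qed (auto simp: word_ser_def split: if_splits)

lemma shuffle_eq_sum_words_le:
  assumes "w \<in> words_le N k"
  shows "shuffle s t w = (\<Sum>(a, b)\<in>words_le N k \<times> words_le N k. s a * t b * sh_word a b w)"
  unfolding shuffle_eq
proof (rule sum.mono_neutral_left)
  show "shuffle_pairs w \<subseteq> words_le N k \<times> words_le N k"
    using assms by (auto simp: shuffle_pairs_def words_le_def)
  show "\<forall>p\<in>words_le N k \<times> words_le N k - shuffle_pairs w. (case p of (a, b) \<Rightarrow> s a * t b * sh_word a b w) = 0"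
    using sh_word_nonzero by (fastforce simp: shuffle_pairs_def)
qed simp_all

lemma iter_int_mult_eq_CF_sh_word:
  "set a \<subseteq> {0..N} \<Longrightarrow> set b \<subseteq> {0..N} \<Longrightarrow> iter_int u a * iter_int u b = CF N (sh_word a b) u"
proof (induction a b rule: sh_word.induct)
  case (3 i a j b)
  let ?U = "letter_input u"
  have "iter_int u (i # a) * iter_int u (j # b)
      = fps_integral0 (?U i * (iter_int u a * iter_int u (j # b)))
        + fps_integral0 (?U j * (iter_int u (i # a) * iter_int u b))"
    by (simp only: iter_int_Cons_letter fps_integral0_mult_fps_integral0 fps_integral0_add mult_ac)
  also have "\<dots> = CF N (sh_word (i # a) (j # b)) u"
    using 3 by (simp add: CF_add CF_prefix_ser)
  finally show ?case .
qed (simp_all add: CF_word_ser)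

lemma CF_nth_eq_truncation:
  "j \<le> k \<Longrightarrow> CF N s u $ j = (\<Sum>w\<in>words_le N k. fps_const (s w) * iter_int u w) $ j"
  by (simp add: CF_nth fps_sum_nth)

lemma CF_shuffle: "CF N (shuffle s t) u = CF N s u * CF N t u"
proof (rule fps_ext)
  fix k
  let ?W = "words_le N k" and ?E = "iter_int u"
  have "CF N (shuffle s t) u $ k =
      (\<Sum>p\<in>?W \<times> ?W. (s (fst p) * t (snd p)) * CF N (sh_word (fst p) (snd p)) u $ k)"
    by (rule CF_nth_linear_combination) (simp_all add: shuffle_eq_sum_words_le case_prod_beta)
  also have "\<dots> = (\<Sum>a\<in>?W. \<Sum>b\<in>?W. s a * t b * (?E a * ?E b) $ k)"
    unfolding sum.cartesian_product'
    by (intro sum.cong refl) (simp add: iter_int_mult_eq_CF_sh_word[symmetric] words_le_def)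
  also have "\<dots> = ((\<Sum>a\<in>?W. fps_const (s a) * ?E a) * (\<Sum>b\<in>?W. fps_const (t b) * ?E b)) $ k"
  proof -
    have "fps_const (s a) * ?E a * (fps_const (t b) * ?E b) = fps_const (s a * t b) * (?E a * ?E b)"
      for a b by (simp add: fps_const_mult[symmetric] mult_ac del: fps_const_mult)
    then show ?thesis by (simp only: sum_product fps_sum_nth fps_mult_left_const_nth)
  qed
  also have "\<dots> = (CF N s u * CF N t u) $ k"
    by (rule fps_mult_nth_cong; erule CF_nth_eq_truncation[symmetric])
  finally show "CF N (shuffle s t) u $ k = (CF N s u * CF N t u) $ k" .
qed

lemma shuffle_nonzero:
  assumes "shuffle s t w \<noteq> 0"
  shows "\<exists>a b. (a, b) \<in> shuffle_pairs w \<and> s a \<noteq> 0 \<and> t b \<noteq> 0 \<and> sh_word a b w \<noteq> 0"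
proof (rule ccontr)
  assume "\<not> ?thesis"
  then have "shuffle s t w = 0" unfolding shuffle_eq by (intro sum.neutral) auto
  with assms show False by simp
qed

lemma shuffle_cong:
  assumes "\<And>a. length a \<le> length w \<Longrightarrow> set a \<subseteq> set w \<Longrightarrow> s a = s' a"
    and "\<And>b. length b \<le> length w \<Longrightarrow> set b \<subseteq> set w \<Longrightarrow> t b = t' b"
  shows "shuffle s t w = shuffle s' t' w"
  unfolding shuffle_eq shuffle_pairs_def using assms by (intro sum.cong) auto

lemma shuffle_eq_Nil_term:
  "shuffle s t w = s [] * t w + (\<Sum>(a, b)\<in>shuffle_pairs w - {([], w)}. s a * t b * sh_word a b w)"
proof -
  have "([], w) \<in> shuffle_pairs w" by (simp add: shuffle_pairs_def)
  then show ?thesis unfolding shuffle_eq by (simp add: sum.remove word_ser_def)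
qed

lemma shuffle_Nil: "shuffle s t [] = s [] * t []"
proof -
  have "shuffle_pairs [] = {([], [])}" by (auto simp: shuffle_pairs_def)
  then show ?thesis by (simp add: shuffle_eq_Nil_term)
qed

lemma psi_nonzero: "psi e eta s w \<noteq> 0 \<Longrightarrow> length eta \<le> length w"
proof (induction eta arbitrary: w)
  case (Cons i eta)
  then obtain w' where "w = 0 # w'" "shuffle (if i = 0 then one_ser else e i) (psi e eta s) w' \<noteq> 0"
    by (auto dest: prefix_ser_nonzero)
  with Cons.IH show ?case by (fastforce dest: shuffle_nonzero simp: shuffle_pairs_def)
qed simp

lemma phibar_nonzero: "phibar g eta s w \<noteq> 0 \<Longrightarrow> length eta \<le> length w \<and> set eta \<subseteq> set w"
proof (induction eta arbitrary: w)
  case (Cons i eta)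
  show ?case
  proof (cases "i = 0")
    case True
    with Cons show ?thesis by (fastforce dest: prefix_ser_nonzero)
  next
    case False
    with Cons.prems obtain w' where "w = i # w'" "shuffle (g i) (phibar g eta s) w' \<noteq> 0"
      by (auto dest: prefix_ser_nonzero)
    with Cons.IH show ?thesis by (fastforce dest: shuffle_nonzero simp: shuffle_pairs_def)
  qed
qed simp

lemma CF_psi: "CF N (psi e eta one_ser) u = iter_int (\<lambda>i. CF N (e i) u) eta"
  by (induction eta) (simp_all add: CF_prefix_ser letter_input_def CF_shuffle)

lemma CF_phibar:
  "set eta \<subseteq> {0..N} \<Longrightarrow> CF N (phibar g eta one_ser) v = iter_int (\<lambda>j. v j * CF N (g j) v) eta"
  by (induction eta) (simp_all add: CF_prefix_ser letter_input_def CF_shuffle mult_ac)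

lemma CF_comp_ser: "CF m (comp_ser q a c) u = CF q a (\<lambda>i. CF m (c i) u)"
proof (rule fps_ext)
  fix k
  have "comp_ser q a c w = (\<Sum>eta\<in>words_le q k. a eta * psi c eta one_ser w)"
    if "w \<in> words_le m k" for w
    unfolding comp_ser_def words_le_def[of q "length w", symmetric]
  proof (rule sum.mono_neutral_left)
    show "words_le q (length w) \<subseteq> words_le q k" using that by (auto simp: words_le_def)
  qed (simp, auto simp: words_le_def dest: psi_nonzero)
  then have "CF m (comp_ser q a c) u $ k = (\<Sum>eta\<in>words_le q k. a eta * CF m (psi c eta one_ser) u $ k)"
    by (rule CF_nth_linear_combination[OF finite_words_le])
  then show "CF m (comp_ser q a c) u $ k = CF q a (\<lambda>i. CF m (c i) u) $ k"
    by (simp add: CF_psi CF_nth[of k k])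
qed

lemma CF_mixed_comp: "CF m (mixed_comp s g) v = CF m s (\<lambda>j. v j * CF m (g j) v)"
proof (rule fps_ext)
  fix k
  have "mixed_comp s g w = (\<Sum>eta\<in>words_le m k. s eta * phibar g eta one_ser w)"
    if "w \<in> words_le m k" for w
    unfolding mixed_comp_def
  proof (rule sum.mono_neutral_left)
    show "{eta. length eta \<le> length w \<and> set eta \<subseteq> set w} \<subseteq> words_le m k"
      using that by (auto simp: words_le_def)
  qed (simp, auto dest: phibar_nonzero)
  then have "CF m (mixed_comp s g) v $ k = (\<Sum>eta\<in>words_le m k. s eta * CF m (phibar g eta one_ser) v $ k)"
    by (rule CF_nth_linear_combination[OF finite_words_le])
  also have "\<dots> = (\<Sum>eta\<in>words_le m k. s eta * iter_int (\<lambda>j. v j * CF m (g j) v) eta $ k)"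
    by (intro sum.cong refl) (simp add: CF_phibar words_le_def)
  finally show "CF m (mixed_comp s g) v $ k = CF m s (\<lambda>j. v j * CF m (g j) v) $ k"
    by (simp add: CF_nth[of k k])
qed

section \<open>Shuffle inverse\<close>

definition length_contractive :: "(('i \<Rightarrow> 'a list \<Rightarrow> 'b) \<Rightarrow> 'i \<Rightarrow> 'a list \<Rightarrow> 'b) \<Rightarrow> bool" where
  "length_contractive F \<longleftrightarrow>
     (\<forall>x y i w. (\<forall>j v. length v < length w \<longrightarrow> x j v = y j v) \<longrightarrow> F x i w = F y i w)"

lemma length_contractive_ex1_fixpoint:
  fixes F :: "('i \<Rightarrow> 'a list \<Rightarrow> 'b) \<Rightarrow> 'i \<Rightarrow> 'a list \<Rightarrow> 'b"
  assumes "length_contractive F"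
  shows "\<exists>!x. F x = x"
proof -
  define R :: "(('i \<times> 'a list) \<times> ('i \<times> 'a list)) set" where "R = measure (\<lambda>(i, w). length w)"
  define G where "G f = (\<lambda>(i, w). F (curry f) i w)" for f :: "'i \<times> 'a list \<Rightarrow> 'b"
  have "adm_wf R G"
    using assms unfolding adm_wf_def length_contractive_def R_def G_def by fastforce
  then have fixpoint: "wfrec R G = G (wfrec R G)"
    by (intro wfrec_fixpoint) (simp add: R_def)
  have "F (curry (wfrec R G)) i w = curry (wfrec R G) i w" for i w
    using fun_cong[OF fixpoint, of "(i, w)"] by (simp add: G_def)
  then have ex: "F (curry (wfrec R G)) = curry (wfrec R G)" by blast
  have "x = y" if "F x = x" and "F y = y" for x y
  proof -
    have "\<forall>i. x i w = y i w" for w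
    proof (induction w rule: length_induct)
      case (1 w)
      then have "F x i w = F y i w" for i
        using assms unfolding length_contractive_def by blast
      with that show ?case by simp
    qed
    then show ?thesis by blast
  qed
  with ex show ?thesis by blast
qed

lemma shuffle_right_inverse_ex1:
  assumes "s [] \<noteq> 0"
  shows "\<exists>!t. shuffle s t = one_ser"
proof -
  \<comment> \<open>F solves the coefficient of w in shuffle s t = 1 for t w; all other terms involve
    shorter words of t.\<close>
  define F :: "(unit \<Rightarrow> ser) \<Rightarrow> unit \<Rightarrow> ser" where
    "F x i w = (one_ser w - (\<Sum>(a, b)\<in>shuffle_pairs w - {([], w)}. s a * x () b * sh_word a b w)) / s []"
    for x i w
  have "F (\<lambda>_. t) i w = t w \<longleftrightarrow> shuffle s t w = one_ser w" for t i w
    using assms by (auto simp: F_def shuffle_eq_Nil_term field_simps)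
  then have fixpoint_iff: "F (\<lambda>_. t) = (\<lambda>_. t) \<longleftrightarrow> shuffle s t = one_ser" for t
    by (simp add: fun_eq_iff)
  have "length_contractive F"
    unfolding length_contractive_def
  proof (intro allI impI)
    fix x y :: "unit \<Rightarrow> ser" and i :: unit and w :: "nat list"
    assume shorter: "\<forall>j v. length v < length w \<longrightarrow> x j v = y j v"
    have "(case p of (a, b) \<Rightarrow> s a * x () b * sh_word a b w)
        = (case p of (a, b) \<Rightarrow> s a * y () b * sh_word a b w)"
      if p: "p \<in> shuffle_pairs w - {([], w)}" for p
    proof (cases p)
      case (Pair a b)
      show ?thesis
      proof (cases "a = []")
        case True
        with p Pair show ?thesis by (auto simp: word_ser_def)
      next
        case False
        with p Pair have "length b < length w" by (cases a) (auto simp: shuffle_pairs_def)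
        with shorter Pair show ?thesis by simp
      qed
    qed
    then have "(\<Sum>(a, b)\<in>shuffle_pairs w - {([], w)}. s a * x () b * sh_word a b w)
        = (\<Sum>(a, b)\<in>shuffle_pairs w - {([], w)}. s a * y () b * sh_word a b w)"
      by (rule sum.cong[OF refl])
    then show "F x i w = F y i w" by (simp add: F_def)
  qed
  then have "\<exists>!x. F x = x" by (rule length_contractive_ex1_fixpoint)
  then obtain x where x: "F x = x" and unique: "\<And>y. F y = y \<Longrightarrow> y = x" by blast
  have "x = (\<lambda>_. x ())" by (simp add: fun_eq_iff)
  with x unique fixpoint_iff show ?thesis by metis
qed

lemma shuffle_shuffle_inv: "s [] \<noteq> 0 \<Longrightarrow> shuffle s (shuffle_inv s) = one_ser"
  unfolding shuffle_inv_def by (rule theI'[OF shuffle_right_inverse_ex1])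

lemma shuffle_inv_unique: "s [] \<noteq> 0 \<Longrightarrow> shuffle s t = one_ser \<Longrightarrow> shuffle_inv s = t"
  unfolding shuffle_inv_def by (rule the1_equality[OF shuffle_right_inverse_ex1])

lemma shuffle_inv_Nil: "s [] \<noteq> 0 \<Longrightarrow> shuffle_inv s [] = inverse (s [])"
  using shuffle_shuffle_inv[of s] shuffle_Nil[of s "shuffle_inv s"]
  by (metis inverse_unique one_ser_def)

lemma CF_shuffle_inv: "s [] \<noteq> 0 \<Longrightarrow> CF N (shuffle_inv s) u = inverse (CF N s u)"
  by (rule fps_inverse_unique[symmetric]) (simp add: CF_shuffle[symmetric] shuffle_shuffle_inv)

section \<open>Supports and the composition inverse\<close>

definition over_alphabet :: "nat set \<Rightarrow> ser \<Rightarrow> bool" where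
  "over_alphabet A s \<longleftrightarrow> (\<forall>w. s w \<noteq> 0 \<longrightarrow> set w \<subseteq> A)"

lemma series_on_over_alphabet: "series_on n l c \<Longrightarrow> over_alphabet {0..n} (c i)"
  by (simp add: series_on_def over_alphabet_def)

lemma over_alphabet_one_ser: "over_alphabet A one_ser"
  by (simp add: over_alphabet_def one_ser_def)

lemma over_alphabet_prefix_ser: "a \<in> A \<Longrightarrow> over_alphabet A s \<Longrightarrow> over_alphabet A (prefix_ser a s)"
  unfolding over_alphabet_def by (metis insert_subset list.set(2) prefix_ser_nonzero)

lemma over_alphabet_shuffle: "over_alphabet A s \<Longrightarrow> over_alphabet A t \<Longrightarrow> over_alphabet A (shuffle s t)"
  unfolding over_alphabet_def
proof (intro allI impI)
  fix w assume "shuffle s t w \<noteq> 0"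
  then obtain a b where "s a \<noteq> 0" "t b \<noteq> 0" "sh_word a b w \<noteq> 0" by (blast dest: shuffle_nonzero)
  moreover assume "\<forall>w. s w \<noteq> 0 \<longrightarrow> set w \<subseteq> A" "\<forall>w. t w \<noteq> 0 \<longrightarrow> set w \<subseteq> A"
  ultimately show "set w \<subseteq> A" using sh_word_nonzero[of a b w] by blast
qed

lemma over_alphabet_psi:
  assumes "0 \<in> A" and "\<And>i. over_alphabet A (e i)" and "over_alphabet A s"
  shows "over_alphabet A (psi e eta s)"
proof (induction eta)
  case (Cons i eta)
  then show ?case
    using assms by (simp add: over_alphabet_prefix_ser over_alphabet_shuffle over_alphabet_one_ser)
qed (simp add: assms)

lemma over_alphabet_phibar:
  assumes "set eta \<subseteq> A" and "\<And>i. over_alphabet A (g i)" and "over_alphabet A s"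
  shows "over_alphabet A (phibar g eta s)"
  using assms(1)
proof (induction eta)
  case (Cons i eta)
  then show ?case
    using assms(2) by (cases "i = 0") (simp_all add: over_alphabet_prefix_ser over_alphabet_shuffle)
qed (simp add: assms(3))

lemma over_alphabet_comp_ser:
  assumes "0 \<in> A" and "\<And>i. over_alphabet A (e i)"
  shows "over_alphabet A (comp_ser l c e)"
  unfolding over_alphabet_def
proof (intro allI impI)
  fix w assume "comp_ser l c e w \<noteq> 0"
  then obtain eta where "c eta * psi e eta one_ser w \<noteq> 0"
    unfolding comp_ser_def by (rule sum.not_neutral_contains_not_neutral)
  moreover have "over_alphabet A (psi e eta one_ser)"
    using assms by (intro over_alphabet_psi over_alphabet_one_ser)
  ultimately show "set w \<subseteq> A" by (simp add: over_alphabet_def)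
qed

lemma over_alphabet_mixed_comp:
  assumes "over_alphabet A c" and "\<And>i. over_alphabet A (g i)"
  shows "over_alphabet A (mixed_comp c g)"
  unfolding over_alphabet_def
proof (intro allI impI)
  fix w assume "mixed_comp c g w \<noteq> 0"
  then obtain eta where "c eta * phibar g eta one_ser w \<noteq> 0"
    unfolding mixed_comp_def by (rule sum.not_neutral_contains_not_neutral)
  then have "c eta \<noteq> 0" and phibar: "phibar g eta one_ser w \<noteq> 0" by auto
  with assms(1) have "set eta \<subseteq> A" by (simp add: over_alphabet_def)
  with assms(2) have "over_alphabet A (phibar g eta one_ser)"
    by (intro over_alphabet_phibar over_alphabet_one_ser)
  with phibar show "set w \<subseteq> A" by (simp add: over_alphabet_def)
qed

lemma over_alphabet_shuffle_inv:
  assumes s0: "s [] \<noteq> 0" and s: "over_alphabet A s"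
  shows "over_alphabet A (shuffle_inv s)"
proof -
  define t where "t w = (if set w \<subseteq> A then shuffle_inv s w else 0)" for w
  have "shuffle s t w = one_ser w" for w
  proof (cases "set w \<subseteq> A")
    case True
    then have "shuffle s t w = shuffle s (shuffle_inv s) w"
      by (intro shuffle_cong) (auto simp: t_def)
    with s0 show ?thesis by (simp add: shuffle_shuffle_inv)
  next
    case False
    have "over_alphabet A (shuffle s t)"
      using s by (intro over_alphabet_shuffle) (simp_all add: over_alphabet_def t_def)
    with False have "shuffle s t w = 0" by (auto simp: over_alphabet_def)
    moreover from False have "w \<noteq> []" by auto
    ultimately show ?thesis by (simp add: one_ser_def)
  qed
  then have "shuffle s t = one_ser" ..
  with s0 have "shuffle_inv s = t" by (rule shuffle_inv_unique)
  moreover have "over_alphabet A t" by (simp add: over_alphabet_def t_def)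
  ultimately show ?thesis by simp
qed

lemma phibar_cong_shorter:
  "(\<forall>j v. length v < length w \<longrightarrow> x j v = y j v) \<Longrightarrow> phibar x eta s w = phibar y eta s w"
proof (induction eta arbitrary: w)
  case (Cons i eta)
  show ?case
  proof (cases w)
    case (Cons b w')
    have "shuffle (x i) (phibar x eta s) w' = shuffle (y i) (phibar y eta s) w'"
      using Cons.prems Cons by (intro shuffle_cong Cons.IH) auto
    moreover have "phibar x eta s w' = phibar y eta s w'"
      using Cons.prems Cons by (intro Cons.IH) auto
    ultimately show ?thesis using Cons by (simp add: prefix_ser_def)
  qed (simp add: prefix_ser_def)
qed simp

lemma length_contractive_mixed_comp: "length_contractive (\<lambda>h i. mixed_comp (S i) h)"
proof (unfold length_contractive_def, intro allI impI)
  fix x y :: vser and i :: nat and w :: "nat list"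
  assume "\<forall>j v. length v < length w \<longrightarrow> x j v = y j v"
  then have "phibar x eta one_ser w = phibar y eta one_ser w" for eta by (rule phibar_cong_shorter)
  then show "mixed_comp (S i) x w = mixed_comp (S i) y w" by (simp add: mixed_comp_def)
qed

lemma comp_ser_Nil: "comp_ser l c e [] = c []"
proof -
  have "{eta. length eta \<le> 0 \<and> set eta \<subseteq> {0..l}} = {[]}" by auto
  then show ?thesis by (simp add: comp_ser_def one_ser_def)
qed

lemma comp_inv_fixpoint:
  assumes g0: "\<And>i. i \<in> {1..m} \<Longrightarrow> g i [] \<noteq> 0"
    and g: "\<And>i. i \<in> {1..m} \<Longrightarrow> over_alphabet {0..m} (g i)"
    and i: "i \<in> {1..m}"
  shows "comp_inv m g i = mixed_comp (shuffle_inv (g i)) (comp_inv m g)"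
proof -
  let ?S = "\<lambda>i. shuffle_inv (g i)"
  let ?P = "\<lambda>h. series_on m m h \<and> (\<forall>i\<in>{1..m}. h i = mixed_comp (?S i) h)"
  \<comment> \<open>The truncation makes the fixpoints of F exactly the solutions required by comp_inv_def.\<close>
  define F where "F h i w = (if i \<in> {1..m} \<and> set w \<subseteq> {0..m} then mixed_comp (?S i) h w else 0)"
    for h i w
  have "length_contractive F"
    using length_contractive_mixed_comp[of ?S] unfolding length_contractive_def F_def by simp
  then have "\<exists>!h. F h = h" by (rule length_contractive_ex1_fixpoint)
  moreover have "?P h \<longleftrightarrow> F h = h" for h
  proof
    assume P: "?P h"
    show "F h = h"
    proof (intro ext)
      fix i w
      show "F h i w = h i w"
      proof (cases "i \<in> {1..m} \<and> set w \<subseteq> {0..m}")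
        case True
        with P have "h i = mixed_comp (?S i) h" by blast
        then have "h i w = mixed_comp (?S i) h w" by (rule fun_cong)
        with True show ?thesis by (simp add: F_def)
      next
        case False
        with P have "h i w = 0" unfolding series_on_def by blast
        moreover from False have "F h i w = 0" unfolding F_def by (simp only: if_False)
        ultimately show ?thesis by simp
      qed
    qed
  next
    assume F: "F h = h"
    have h: "series_on m m h"
      unfolding series_on_def
    proof (intro allI impI)
      fix i w assume "h i w \<noteq> 0"
      with F have "F h i w \<noteq> 0" by simp
      then show "i \<in> {1..m} \<and> set w \<subseteq> {0..m}" by (auto simp: F_def split: if_splits)
    qed
    have "h i w = mixed_comp (?S i) h w" if "i \<in> {1..m}" for i w
    proof -
      have "over_alphabet {0..m} (?S i)"
        using that g0 g by (intro over_alphabet_shuffle_inv)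
      then have "over_alphabet {0..m} (mixed_comp (?S i) h)"
        by (rule over_alphabet_mixed_comp[OF _ series_on_over_alphabet[OF h]])
      moreover have "h i w = F h i w" using F by simp
      ultimately show ?thesis using that unfolding over_alphabet_def F_def by (auto split: if_splits)
    qed
    with h show "?P h" by blast
  qed
  ultimately have "\<exists>!h. ?P h" by simp
  then have "?P (comp_inv m g)"
    unfolding comp_inv_def by (rule theI')
  with i show ?thesis by blast
qed

section \<open>Causality and the closed loop\<close>

lemma iter_int_nth_cong:
  assumes "\<And>i j. i \<in> set w - {0} \<Longrightarrow> j < k \<Longrightarrow> u i $ j = u' i $ j"
  shows "iter_int u w $ k = iter_int u' w $ k"
  using assms
proof (induction w arbitrary: k)
  case (Cons i w)
  show ?case
  proof (cases k)
    case (Suc k')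
    have "(letter_input u i * iter_int u w) $ k' = (letter_input u' i * iter_int u' w) $ k'"
      using Cons Suc by (intro fps_mult_nth_cong) (auto simp: letter_input_def)
    with Suc show ?thesis by (simp del: iter_int.simps add: iter_int_Cons_letter)
  qed simp
qed simp

lemma CF_nth_cong:
  "(\<And>i j. i \<in> {1..N} \<Longrightarrow> j < k \<Longrightarrow> u i $ j = u' i $ j) \<Longrightarrow> CF N s u $ k = CF N s u' $ k"
proof -
  assume u: "\<And>i j. i \<in> {1..N} \<Longrightarrow> j < k \<Longrightarrow> u i $ j = u' i $ j"
  have "iter_int u w $ k = iter_int u' w $ k" if "w \<in> words_le N k" for w
    using that by (intro iter_int_nth_cong u) (auto simp: words_le_def)
  then show ?thesis by (simp add: CF_nth[of k k])
qed

lemma CF_cong: "(\<And>i. i \<in> {1..N} \<Longrightarrow> u i = u' i) \<Longrightarrow> CF N s u = CF N s u'"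
  by (intro fps_ext CF_nth_cong) simp

lemma closed_loop_unique:
  assumes y: "\<forall>i\<in>{1..q}. y i = CF m (c i) (\<lambda>j. v j * CF q (d j) y)"
    and y': "\<forall>i\<in>{1..q}. y' i = CF m (c i) (\<lambda>j. v j * CF q (d j) y')"
  shows "\<forall>i\<in>{1..q}. y i = y' i"
proof -
  have "\<forall>i\<in>{1..q}. y i $ k = y' i $ k" for k
  proof (induction k rule: less_induct)
    case (less k)
    then have "CF q (d l) y $ j = CF q (d l) y' $ j" if "j < k" for l j
      using that by (intro CF_nth_cong) auto
    then have "(v l * CF q (d l) y) $ j = (v l * CF q (d l) y') $ j" if "j < k" for l j
      using that by (intro fps_mult_nth_cong) auto
    then have "CF m (c i) (\<lambda>j. v j * CF q (d j) y) $ k = CF m (c i) (\<lambda>j. v j * CF q (d j) y') $ k" for i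
      by (intro CF_nth_cong)
    moreover have "y i = CF m (c i) (\<lambda>j. v j * CF q (d j) y)"
      and "y' i = CF m (c i) (\<lambda>j. v j * CF q (d j) y')" if "i \<in> {1..q}" for i
      using y y' that by blast+
    ultimately show ?case by metis
  qed
  then show ?thesis by (simp add: fps_eq_iff)
qed

lemma fb_product_solves_closed_loop:
  fixes v :: "nat \<Rightarrow> real fps"
  assumes c: "series_on m q c" and d: "purely_improper m d"
  defines "y \<equiv> \<lambda>i. CF m (fb_product m q c d i) v"
  shows "\<forall>i\<in>{1..q}. y i = CF m (c i) (\<lambda>j. v j * CF q (d j) y)"
proof -
  define g where "g = (\<lambda>j. if j \<in> {1..m} then comp_ser q (shuffle_inv (d j)) c else (\<lambda>_. 0))"
  define h where "h = comp_inv m g"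
  define u where "u = (\<lambda>j. v j * CF m (h j) v)"
  have "fb_product m q c d i = mixed_comp (c i) h" for i
    by (simp only: fb_product_def Let_def g_def h_def)
  then have y_eq: "y = (\<lambda>i. CF m (c i) u)"
    by (simp add: y_def u_def CF_mixed_comp)
  have d0: "d j [] \<noteq> 0" if "j \<in> {1..m}" for j
    using d that by (simp add: purely_improper_def)
  have g0: "g j [] \<noteq> 0" if "j \<in> {1..m}" for j
    using that d0[OF that] by (simp add: g_def comp_ser_Nil shuffle_inv_Nil)
  have g: "over_alphabet {0..m} (g j)" if "j \<in> {1..m}" for j
    using that c by (simp add: g_def over_alphabet_comp_ser series_on_over_alphabet)
  have feedback: "CF m (h j) v = CF q (d j) y" if j: "j \<in> {1..m}" for j
  proof -
    have "CF m (h j) v = CF m (shuffle_inv (g j)) u"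
      using comp_inv_fixpoint[OF g0 g j] by (simp add: h_def u_def CF_mixed_comp)
    also have "\<dots> = inverse (CF m (g j) u)"
      using g0[OF j] by (rule CF_shuffle_inv)
    also have "CF m (g j) u = CF q (shuffle_inv (d j)) y"
      using j by (simp add: g_def CF_comp_ser y_eq)
    also have "\<dots> = inverse (CF q (d j) y)"
      using d0[OF j] by (rule CF_shuffle_inv)
    finally show ?thesis
      using d0[OF j] by (simp add: CF_nth_0)
  qed
  have "CF m (c i) u = CF m (c i) (\<lambda>j. v j * CF q (d j) y)" for i
    by (rule CF_cong) (simp add: u_def feedback)
  with y_eq show ?thesis by metis
qed

theorem theorem15:
  fixes m q :: nat and c d :: vser
  assumes "series_on m q c" and "series_on q m d"
    and "purely_improper q c" and "purely_improper m d"
  shows "\<forall>(v :: nat \<Rightarrow> real fps) (y :: nat \<Rightarrow> real fps).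
           (\<forall>i\<in>{1..q}. y i = CF m (c i) (\<lambda>j. v j * CF q (d j) y))
           \<longleftrightarrow> (\<forall>i\<in>{1..q}. y i = CF m (fb_product m q c d i) v)"
proof (intro allI)
  fix v y :: "nat \<Rightarrow> real fps"
  let ?e = "\<lambda>i. CF m (fb_product m q c d i) v"
  have e: "\<forall>i\<in>{1..q}. ?e i = CF m (c i) (\<lambda>j. v j * CF q (d j) ?e)"
    using assms(1,4) by (rule fb_product_solves_closed_loop)
  show "(\<forall>i\<in>{1..q}. y i = CF m (c i) (\<lambda>j. v j * CF q (d j) y)) \<longleftrightarrow> (\<forall>i\<in>{1..q}. y i = ?e i)"
  proof
    assume "\<forall>i\<in>{1..q}. y i = CF m (c i) (\<lambda>j. v j * CF q (d j) y)"
    from closed_loop_unique[OF this e] show "\<forall>i\<in>{1..q}. y i = ?e i" .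
  next
    assume y: "\<forall>i\<in>{1..q}. y i = ?e i"
    then have "CF q (d j) y = CF q (d j) ?e" for j by (intro CF_cong) simp
    with y e show "\<forall>i\<in>{1..q}. y i = CF m (c i) (\<lambda>j. v j * CF q (d j) y)" by simp
  qed
qed

end
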